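(* Let $V$ and $W$ be pfd $B$-persistence modules and $\epsilon\ge0$. (1) $\mathscr{B}_{2\epsilon}(V^{\mathcal{L}})=\mathscr{B}(V^{\mathcal{L}})$ and $\mathscr{B}_{2\epsilon}(W^{\mathcal{L}})=\mathscr{B}(W^{\mathcal{L}})$. (2) Let $G$ be the bipartite graph with vertex multisets $\mathscr{B}(V^{\mathcal{L}})$ and $\mathscr{B}(W^{\mathcal{L}})$, with an edge between $M$ and $N$ iff $M$ and $N$ are $\Lambda_\epsilon$-interleaved. Suppose $V^{\mathcal{L}}$ and $W^{\mathcal{L}}$ are $\Lambda_\epsilon$-interleaved. Then: - the full subgraph $G(\mathscr{B}_{2\epsilon}(V^{\mathcal{L}}),\mathscr{B}(W^{\mathcal{L}}))$ satisfies Hall's condition (H): every finite $X\subseteq\mathscr{B}_{2\epsilon}(V^{\mathcal{L}})$ has $|X|\le|N(X)|$; - the full subgraph $G(\mathscr{B}(V^{\mathcal{L}}),\mathscr{B}_{2\epsilon}(W^{\mathcal{L}}))$ satisfies (H'): every finite $Y\subseteq\mathscr{B}_{2\epsilon}(W^{\mathcal{L}})$ has $|Y|\le|N(Y)|$. Here $N(\cdot)$ denotes the set of neighbours in $G$. Consequently, if $V^{\mathcal{L}}$ and $W^{\mathcal{L}}$ are $\Lambda_\epsilon$-interleaved, then there exists a bottleneck $\Lambda_\epsilon$-interleaving between them.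
   Context: Let $k$ be a field. The bipath poset $B$ has underlying set $(\mathbb{R}\times\{1,2\})\sqcup\{-\infty,+\infty\}$. Its order is: $x\le y$ iff $x=-\infty$, or $y=+\infty$, or $x=(s,i)$, $y=(t,i)$ with the same $i$ and $s\le t$. $B$-persistence modules are functors from $B$ (as a category) to $k$-vector spaces; pfd means all spaces are finite-dimensional. An interval of $B$ is a nonempty convex and connected subset. Every pfd $B$-module decomposes uniquely (up to isomorphism and permutation) into interval modules $k_I$; $\mathscr{B}(V)$ is the multiset of these summands (elements counted with multiplicity, each a separate vertex). $\mathcal{L}$ is the set of intervals $\neq B$ containing $-\infty$. $V^{\mathcal{L}}$ is the direct sum of the interval summands of $V$ whose interval lies in $\mathcal{L}$. For $\epsilon\ge0$, $\Lambda_\epsilon$ sends $(r,i)\mapsto(r+\epsilon,i)$ and fixes $\pm\infty$. Then: - $V(\epsilon)_b=V_{\Lambda_\epsilon b}$ and $V(\epsilon)(b,b')=V(\Lambda_\epsilon b,\Lambda_\epsilon b')$; $\phi(\epsilon)$ has components $\phi_{\Lambda_\epsilon b}$; - $V_{0\to\epsilon}$ has components $V(b,\Lambda_\epsilon b)$; - $V$ is $\Lambda_\epsilon$-trivial if $V_{0\to\epsilon}=0$, and $\Lambda_\epsilon$-significant otherwise; - $\mathscr{B}_{2\epsilon}(V)$ is the submultiset of $\Lambda_{2\epsilon}$-significant summands in $\mathscr{B}(V)$; - a $\Lambda_\epsilon$-interleaving is a pair $\alpha\colon V\to W(\epsilon)$, $\beta\colon W\to V(\epsilon)$ with $\beta(\epsilon)\alpha=V_{0\to2\epsilon}$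 and $\alpha(\epsilon)\beta=W_{0\to2\epsilon}$; - a bottleneck $\Lambda_\epsilon$-interleaving is a bijection $\sigma$ between submultisets of $\mathscr{B}(V)$ and $\mathscr{B}(W)$ such that all unmatched summands are $\Lambda_{2\epsilon}$-trivial and each matched pair is $\Lambda_\epsilon$-interleaved. A full subgraph $G(X',Y')$ has vertex sets $X'$, $Y'$ and all edges of $G$ between them. *)

theory Defs
  imports Complex_Main
begin

datatype bidx = One | Two

datatype bipath = NegInf | PosInf | Pt real bidx

fun bp_le :: "bipath \<Rightarrow> bipath \<Rightarrow> bool" where
  "bp_le NegInf _ = True"
| "bp_le _ PosInf = True"
| "bp_le (Pt s i) (Pt t j) = (i = j \<and> s \<le> t)"
| "bp_le _ _ = False"

fun shift :: "real \<Rightarrow> bipath \<Rightarrow> bipath" where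
  "shift e (Pt r i) = Pt (r + e) i"
| "shift e NegInf = NegInf"
| "shift e PosInf = PosInf"

definition bp_convex :: "bipath set \<Rightarrow> bool" where
  "bp_convex I \<longleftrightarrow> (\<forall>x\<in>I. \<forall>z\<in>I. \<forall>y. bp_le x y \<and> bp_le y z \<longrightarrow> y \<in> I)"

definition bp_connected :: "bipath set \<Rightarrow> bool" where
  "bp_connected I \<longleftrightarrow> (\<forall>x\<in>I. \<forall>y\<in>I. \<exists>p :: bipath list. p \<noteq> [] \<and> hd p = x \<and> last p = y
      \<and> set p \<subseteq> I
      \<and> (\<forall>i. Suc i < length p \<longrightarrow> bp_le (p ! i) (p ! Suc i) \<or> bp_le (p ! Suc i) (p ! i)))"

definition bp_interval :: "bipath set \<Rightarrow> bool" where
  "bp_interval I \<longleftrightarrow> I \<noteq> {} \<and> bp_convex I \<and> bp_connected I"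

definition Lset :: "bipath set set" where
  "Lset = {I. bp_interval I \<and> I \<noteq> UNIV \<and> NegInf \<in> I}"

text \<open>A B-module is represented inside an ambient k-vector space 'v (with scalar
multiplication s): a family of subspaces V_b and maps V(b,b'), meaningful on V_b.\<close>
type_synonym 'v pmod = "(bipath \<Rightarrow> 'v set) \<times> (bipath \<Rightarrow> bipath \<Rightarrow> 'v \<Rightarrow> 'v)"

definition lin_on :: "('k \<Rightarrow> 'v::ab_group_add \<Rightarrow> 'v) \<Rightarrow> ('k \<Rightarrow> 'w::ab_group_add \<Rightarrow> 'w)
    \<Rightarrow> 'v set \<Rightarrow> 'w set \<Rightarrow> ('v \<Rightarrow> 'w) \<Rightarrow> bool" where
  "lin_on s1 s2 A C f \<longleftrightarrow> f ` A \<subseteq> C \<and> (\<forall>x\<in>A. \<forall>y\<in>A. f (x + y) = f x + f y)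
     \<and> (\<forall>c. \<forall>x\<in>A. f (s1 c x) = s2 c (f x))"

definition is_pmod :: "('k::field \<Rightarrow> 'v::ab_group_add \<Rightarrow> 'v) \<Rightarrow> 'v pmod \<Rightarrow> bool" where
  "is_pmod s V \<longleftrightarrow> (\<forall>b. module.subspace s (fst V b))
     \<and> (\<forall>b b'. bp_le b b' \<longrightarrow> lin_on s s (fst V b) (fst V b') (snd V b b'))
     \<and> (\<forall>b. \<forall>x\<in>fst V b. snd V b b x = x)
     \<and> (\<forall>b b' b''. bp_le b b' \<longrightarrow> bp_le b' b'' \<longrightarrow>
          (\<forall>x\<in>fst V b. snd V b' b'' (snd V b b' x) = snd V b b'' x))"

definition is_pfd :: "('k::field \<Rightarrow> 'v::ab_group_add \<Rightarrow> 'v) \<Rightarrow> 'v pmod \<Rightarrow> bool" where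
  "is_pfd s V \<longleftrightarrow> is_pmod s V \<and>
     (\<forall>b. \<exists>S. finite S \<and> S \<subseteq> fst V b \<and> module.span s S = fst V b)"

definition is_hom :: "('k::field \<Rightarrow> 'v::ab_group_add \<Rightarrow> 'v) \<Rightarrow> ('k \<Rightarrow> 'w::ab_group_add \<Rightarrow> 'w)
    \<Rightarrow> 'v pmod \<Rightarrow> 'w pmod \<Rightarrow> (bipath \<Rightarrow> 'v \<Rightarrow> 'w) \<Rightarrow> bool" where
  "is_hom s1 s2 V W \<phi> \<longleftrightarrow> (\<forall>b. lin_on s1 s2 (fst V b) (fst W b) (\<phi> b))
     \<and> (\<forall>b b'. bp_le b b' \<longrightarrow> (\<forall>x\<in>fst V b. snd W b b' (\<phi> b x) = \<phi> b' (snd V b b' x)))"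

definition pshift :: "real \<Rightarrow> 'v pmod \<Rightarrow> 'v pmod" where
  "pshift e V = (\<lambda>b. fst V (shift e b), \<lambda>b b'. snd V (shift e b) (shift e b'))"

definition hshift :: "real \<Rightarrow> (bipath \<Rightarrow> 'v \<Rightarrow> 'w) \<Rightarrow> (bipath \<Rightarrow> 'v \<Rightarrow> 'w)" where
  "hshift e \<phi> = (\<lambda>b. \<phi> (shift e b))"

definition transl :: "real \<Rightarrow> 'v pmod \<Rightarrow> (bipath \<Rightarrow> 'v \<Rightarrow> 'v)" where
  "transl e V = (\<lambda>b. snd V b (shift e b))"

definition iso_pmod :: "('k::field \<Rightarrow> 'v::ab_group_add \<Rightarrow> 'v) \<Rightarrow> ('k \<Rightarrow> 'w::ab_group_add \<Rightarrow> 'w)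
    \<Rightarrow> 'v pmod \<Rightarrow> 'w pmod \<Rightarrow> bool" where
  "iso_pmod s1 s2 V W \<longleftrightarrow> (\<exists>\<phi>. is_hom s1 s2 V W \<phi> \<and> (\<forall>b. bij_betw (\<phi> b) (fst V b) (fst W b)))"

definition interval_mod :: "bipath set \<Rightarrow> ('k::field) pmod" where
  "interval_mod I = (\<lambda>b. if b \<in> I then UNIV else {0},
                     \<lambda>b b'. if b \<in> I \<and> b' \<in> I then id else (\<lambda>_. 0))"

definition shift_trivial :: "real \<Rightarrow> ('v::zero) pmod \<Rightarrow> bool" where
  "shift_trivial e V \<longleftrightarrow> (\<forall>b. \<forall>x\<in>fst V b. transl e V b x = 0)"

definition interleaved :: "('k::field \<Rightarrow> 'v::ab_group_add \<Rightarrow> 'v) \<Rightarrow> ('k \<Rightarrow> 'w::ab_group_add \<Rightarrow> 'w)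
    \<Rightarrow> real \<Rightarrow> 'v pmod \<Rightarrow> 'w pmod \<Rightarrow> bool" where
  "interleaved s1 s2 e V W \<longleftrightarrow> (\<exists>\<alpha> \<beta>.
      is_hom s1 s2 V (pshift e W) \<alpha> \<and> is_hom s2 s1 W (pshift e V) \<beta>
    \<and> (\<forall>b. \<forall>x\<in>fst V b. hshift e \<beta> b (\<alpha> b x) = transl (2 * e) V b x)
    \<and> (\<forall>b. \<forall>x\<in>fst W b. hshift e \<alpha> b (\<beta> b x) = transl (2 * e) W b x))"

text \<open>A submodule of V: a family of subspaces closed under the structure maps of V;
  as a module it is (U, snd V).\<close>
definition submod :: "('k::field \<Rightarrow> 'v::ab_group_add \<Rightarrow> 'v) \<Rightarrow> 'v pmod \<Rightarrow> (bipath \<Rightarrow> 'v set) \<Rightarrow> bool" where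
  "submod s V U \<longleftrightarrow> (\<forall>b. module.subspace s (U b) \<and> U b \<subseteq> fst V b)
     \<and> (\<forall>b b'. bp_le b b' \<longrightarrow> snd V b b' ` U b \<subseteq> U b')"

definition sum_set :: "'j set \<Rightarrow> ('j \<Rightarrow> bipath \<Rightarrow> 'v::comm_monoid_add set) \<Rightarrow> bipath \<Rightarrow> 'v set" where
  "sum_set J U b = {sum u F | F u. finite F \<and> F \<subseteq> J \<and> (\<forall>j\<in>F. u j \<in> U j b)}"

definition indep_family :: "'j set \<Rightarrow> ('j \<Rightarrow> bipath \<Rightarrow> 'v::comm_monoid_add set) \<Rightarrow> bipath \<Rightarrow> bool" where
  "indep_family J U b \<longleftrightarrow> (\<forall>F u. finite F \<and> F \<subseteq> J \<and> (\<forall>j\<in>F. u j \<in> U j b) \<and> sum u F = 0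
      \<longrightarrow> (\<forall>j\<in>F. u j = 0))"

text \<open>The multiset B(V) is
  the index set J, vertex j standing for the summand (U j, snd V).\<close>
definition interval_decomp :: "('k::field \<Rightarrow> 'v::ab_group_add \<Rightarrow> 'v) \<Rightarrow> 'v pmod
    \<Rightarrow> 'j set \<Rightarrow> ('j \<Rightarrow> bipath \<Rightarrow> 'v set) \<Rightarrow> ('j \<Rightarrow> bipath set) \<Rightarrow> bool" where
  "interval_decomp s V J U I \<longleftrightarrow>
     (\<forall>j\<in>J. submod s V (U j) \<and> bp_interval (I j)
             \<and> iso_pmod s ((*) :: 'k \<Rightarrow> 'k \<Rightarrow> 'k) (U j, snd V) (interval_mod (I j)))
   \<and> (\<forall>b. fst V b = sum_set J U b \<and> indep_family J U b)"

text \<open>Indices of the summands of V lying in L, i.e. B(V^L).\<close>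
definition BL :: "'j set \<Rightarrow> ('j \<Rightarrow> bipath set) \<Rightarrow> 'j set" where
  "BL J I = {j \<in> J. I j \<in> Lset}"

text \<open>V^L: the direct sum of the summands of V whose interval lies in L.\<close>
definition modL :: "'v::comm_monoid_add pmod \<Rightarrow> 'j set \<Rightarrow> ('j \<Rightarrow> bipath \<Rightarrow> 'v set) \<Rightarrow> ('j \<Rightarrow> bipath set) \<Rightarrow> 'v pmod" where
  "modL V J U I = (sum_set (BL J I) U, snd V)"

text \<open>B_{e}(X): the sub-multiset of Lambda_e-significant summands among the indices X.\<close>
definition Bsig :: "real \<Rightarrow> 'v::zero pmod \<Rightarrow> 'j set \<Rightarrow> ('j \<Rightarrow> bipath \<Rightarrow> 'v set) \<Rightarrow> 'j set" where
  "Bsig e V X U = {j \<in> X. \<not> shift_trivial e (U j, snd V)}"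

end

(* Every summand of V^L is an interval module k_I with I a down-set containing -inf, so it is
   generated by a single vector at -inf, a point fixed by every shift; in particular all these
   summands are Lambda_2e-significant, and V^L(-inf), W^L(-inf) have bases g_j, h_k indexed by the
   two barcodes.  An interleaving alpha, beta of V^L and W^L has, at -inf, coefficient matrices P and
   Q with PQ = 1, and naturality forces Lambda_e^-1(I_k) <= I_j wherever P_jk <> 0 and
   Lambda_e^-1(I_j) <= I_k wherever Q_kj <> 0.  A potential on intervals that strictly increases
   when only one of these two containments holds shows that the rows of P indexed by any X,
   restricted to the columns whose intervals are e-close to some interval of X, are linearly
   independent.  This is Hall's condition for e-closeness, which implies interleaving of the
   summands, and Hall's theorem applied in both directions yields a bijection of the barcodes. *)

theory Submission
  imports Defs "HOL-Library.Function_Algebras" "HOL-Library.Product_Lexorder" "HOL-Library.Product_Plus"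
begin

section \<open>Linear algebra\<close>

lemma lin_on_zero: "lin_on s1 s2 A C f \<Longrightarrow> 0 \<in> A \<Longrightarrow> f 0 = 0"
  unfolding lin_on_def by (metis add.right_neutral add_left_cancel)

lemma (in module) lin_on_sum_scale:
  assumes f: "lin_on scale s2 A C f" and A: "subspace A"
    and "finite F" and "\<forall>i\<in>F. u i \<in> A"
  shows "f (\<Sum>i\<in>F. c i *s u i) = (\<Sum>i\<in>F. s2 (c i) (f (u i)))"
  using assms(3,4)
proof (induction F rule: finite_induct)
  case empty
  then show ?case using lin_on_zero[OF f] subspace_0[OF A] by simp
next
  case (insert i F)
  then have "(\<Sum>i\<in>F. c i *s u i) \<in> A" "c i *s u i \<in> A"
    using A by (auto intro: subspace_sum subspace_scale)
  then show ?case
    using insert f unfolding lin_on_def by simp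
qed

lemma (in vector_space) inj_on_independent_image:
  assumes indep: "\<And>F c. finite F \<Longrightarrow> F \<subseteq> X \<Longrightarrow> (\<Sum>j\<in>F. c j *s r j) = 0 \<Longrightarrow> \<forall>j\<in>F. c j = 0"
  shows "inj_on r X \<and> independent (r ` X)"
proof
  show inj: "inj_on r X"
  proof (rule inj_onI, rule ccontr)
    fix i j assume "i \<in> X" "j \<in> X" "r i = r j" "i \<noteq> j"
    then have "(\<Sum>l\<in>{i, j}. (if l = i then 1 else -1) *s r l) = 0"
      by simp
    then show False
      using indep[of "{i, j}"] \<open>i \<in> X\<close> \<open>j \<in> X\<close> by fastforce
  qed
  show "independent (r ` X)"
  proof
    assume "dependent (r ` X)"
    then obtain T u where T: "finite T" "T \<subseteq> r ` X" "(\<Sum>v\<in>T. u v *s v) = 0" "\<exists>v\<in>T. u v \<noteq> 0"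
      unfolding dependent_explicit by blast
    obtain F where F: "F \<subseteq> X" "T = r ` F"
      using T(2) by (meson subset_image_iff)
    have "inj_on r F"
      using inj F(1) by (rule inj_on_subset)
    then have "finite F" "(\<Sum>j\<in>F. u (r j) *s r j) = 0"
      using T(1,3) F(2) by (auto simp: finite_image_iff sum.reindex)
    then show False
      using indep[of F "\<lambda>j. u (r j)"] F T(4) by blast
  qed
qed

lemma card_le_if_left_kernel_trivial:
  fixes P :: "'a \<Rightarrow> 'b \<Rightarrow> 'k::field"
  assumes X: "finite X" and N: "finite N"
    and ker: "\<And>c. (\<And>k. k \<in> N \<Longrightarrow> (\<Sum>j\<in>X. c j * P j k) = 0) \<Longrightarrow> \<forall>j\<in>X. c j = 0"
  shows "card X \<le> card N"
proof -
  interpret F: vector_space "\<lambda>(c::'k) (f::'b \<Rightarrow> 'k) x. c * f x"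
    by unfold_locales (simp_all add: fun_eq_iff algebra_simps)
  have sum_apply: "(\<Sum>i\<in>S. f i) x = (\<Sum>i\<in>S. f i x)" if "finite S" for S and f :: "'c \<Rightarrow> 'b \<Rightarrow> 'k" and x
    using that by (induction S rule: finite_induct) auto
  define row where "row j = (\<lambda>k. if k \<in> N then P j k else 0)" for j
  define delta where "delta k = (\<lambda>x. of_bool (x = k) :: 'k)" for k :: 'b
  have "row j = (\<Sum>k\<in>N. (\<lambda>x. P j k * delta k x))" for j
    by (simp add: fun_eq_iff sum_apply[OF N] row_def delta_def N)
  then have span: "row ` X \<subseteq> F.span (delta ` N)"
    by (auto intro: F.span_sum F.span_scale F.span_base)
  have "inj_on row X \<and> F.independent (row ` X)"
  proof (rule F.inj_on_independent_image)
    fix G c assume G: "finite G" "G \<subseteq> X" and comb: "(\<Sum>j\<in>G. (\<lambda>x. c j * row j x)) = 0"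
    define c' where "c' j = (if j \<in> G then c j else 0)" for j
    have "(\<Sum>j\<in>X. c' j * P j k) = 0" if "k \<in> N" for k
    proof -
      have "(\<Sum>j\<in>X. c' j * P j k) = (\<Sum>j\<in>G. c j * P j k)"
        by (rule sum.mono_neutral_cong_right[OF X G(2)]) (auto simp: c'_def)
      also have "\<dots> = 0"
        using fun_cong[OF comb, of k] that by (simp add: sum_apply[OF G(1)] row_def)
      finally show ?thesis .
    qed
    then show "\<forall>j\<in>G. c j = 0"
      using ker[of c'] G(2) unfolding c'_def by (metis subsetD)
  qed
  then show ?thesis
    using F.independent_span_bound[OF _ _ span] N
    by (metis card_image card_image_le finite_imageI order_trans)
qed

text \<open>A vector \<open>c\<close> supported in \<open>X\<close> with \<open>c P\<close> vanishing on the neighbours of \<open>X\<close> satisfies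
  \<open>c = c P Q\<close>; following a nonzero term from a \<open>j\<^sub>0\<close> of maximal potential in the support of \<open>c\<close>
  through \<open>Q\<close> and back through \<open>P\<close> crosses two non-edges and ends at a \<open>j'\<close> of larger potential.\<close>
lemma card_le_neighbours_if_potential:
  fixes P :: "'a \<Rightarrow> 'b \<Rightarrow> 'k::field" and Q :: "'b \<Rightarrow> 'a \<Rightarrow> 'k"
    and pA :: "'a \<Rightarrow> 'o::linorder" and pB :: "'b \<Rightarrow> 'o"
  assumes A: "finite A" and B: "finite B"
    and PQ: "\<And>j j'. j \<in> A \<Longrightarrow> j' \<in> A \<Longrightarrow> (\<Sum>k\<in>B. P j k * Q k j') = of_bool (j = j')"
    and P_pot: "\<And>j k. j \<in> A \<Longrightarrow> k \<in> B \<Longrightarrow> P j k \<noteq> 0 \<Longrightarrow> \<not> R j k \<Longrightarrow> pB k < pA j"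
    and Q_pot: "\<And>j k. j \<in> A \<Longrightarrow> k \<in> B \<Longrightarrow> Q k j \<noteq> 0 \<Longrightarrow> \<not> R j k \<Longrightarrow> pA j < pB k"
    and X: "X \<subseteq> A"
  shows "card X \<le> card {k\<in>B. \<exists>j\<in>X. R j k}"
proof (rule card_le_if_left_kernel_trivial)
  show "finite X" using A X by (rule finite_subset[rotated])
  show "finite {k\<in>B. \<exists>j\<in>X. R j k}" using B by simp
  fix c assume ker: "\<And>k. k \<in> {k\<in>B. \<exists>j\<in>X. R j k} \<Longrightarrow> (\<Sum>j\<in>X. c j * P j k) = 0"
  show "\<forall>j\<in>X. c j = 0"
  proof (rule ccontr)
    define S where "S = {j\<in>X. c j \<noteq> 0}"
    assume "\<not> (\<forall>j\<in>X. c j = 0)"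
    then have "S \<noteq> {}" "finite S"
      using \<open>finite X\<close> by (auto simp: S_def)
    then have "Max (pA ` S) \<in> pA ` S"
      by (intro Max_in) auto
    then obtain j0 where j0: "j0 \<in> S" "pA j0 = Max (pA ` S)"
      by auto
    have max: "pA j \<le> pA j0" if "j \<in> S" for j
      using j0(2) \<open>finite S\<close> that by simp
    define a where "a k = (\<Sum>j\<in>X. c j * P j k)" for k
    have "(\<Sum>k\<in>B. a k * Q k j0) = (\<Sum>j\<in>X. c j * (\<Sum>k\<in>B. P j k * Q k j0))"
      unfolding a_def by (simp add: sum_distrib_left sum_distrib_right sum.swap[of _ B] mult.assoc)
    also have "\<dots> = c j0"
      using j0(1) X PQ by (simp add: S_def subset_iff sum.delta' \<open>finite X\<close> cong: sum.cong)
    finally have "(\<Sum>k\<in>B. a k * Q k j0) \<noteq> 0"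
      using j0(1) by (simp add: S_def)
    then obtain k where k: "k \<in> B" "a k \<noteq> 0" "Q k j0 \<noteq> 0"
      by (rule sum.not_neutral_contains_not_neutral) simp
    obtain j' where "j' \<in> X" "c j' * P j' k \<noteq> 0"
      using k(2) unfolding a_def by (rule sum.not_neutral_contains_not_neutral)
    then have j': "j' \<in> S" "P j' k \<noteq> 0"
      by (auto simp: S_def)
    have no_edge: "\<not> R j k" if "j \<in> X" for j
      using ker[of k] k(1,2) that unfolding a_def by auto
    have "pA j0 < pB k"
      using Q_pot[of j0 k] k(1,3) j0(1) X no_edge by (auto simp: S_def)
    also have "pB k < pA j'"
      using P_pot[of j' k] k(1) j' X no_edge by (auto simp: S_def)
    finally show False
      using max[OF j'(1)] by simp
  qed
qed

section \<open>Hall's marriage theorem\<close>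

lemma matching_Un:
  assumes "inj_on f S" "\<forall>a\<in>S. f a \<in> B\<^sub>1 \<and> R a (f a)"
    and "inj_on g T" "\<forall>a\<in>T. g a \<in> B\<^sub>2 \<and> R a (g a)"
    and "B\<^sub>1 \<inter> B\<^sub>2 = {}"
  shows "\<exists>h. inj_on h (S \<union> T) \<and> (\<forall>a\<in>S \<union> T. h a \<in> B\<^sub>1 \<union> B\<^sub>2 \<and> R a (h a))"
proof -
  define h where "h a = (if a \<in> S then f a else g a)" for a
  have "inj_on h (S \<union> T)"
  proof (rule inj_onI)
    fix x y assume xy: "x \<in> S \<union> T" "y \<in> S \<union> T" "h x = h y"
    have "f x \<noteq> g y" "g y \<noteq> f x" if "x \<in> S" "y \<in> T" for x y
      using assms(2,4,5) that by (metis disjoint_iff)+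
    then show "x = y"
      using xy assms(1,3) unfolding h_def inj_on_def by (auto split: if_splits)
  qed
  moreover have "\<forall>a\<in>S \<union> T. h a \<in> B\<^sub>1 \<union> B\<^sub>2 \<and> R a (h a)"
    using assms by (auto simp: h_def)
  ultimately show ?thesis by blast
qed

lemma card_le_neighbours_Diff_tight:
  assumes B: "finite B" and A: "finite A" and S: "S \<subseteq> A"
    and hall: "\<And>S'. S' \<subseteq> A \<Longrightarrow> card S' \<le> card {b\<in>B. \<exists>a\<in>S'. R a b}"
    and tight: "card {b\<in>B. \<exists>a\<in>S. R a b} \<le> card S"
    and T: "T \<subseteq> A - S"
  shows "card T \<le> card {b \<in> B - {b\<in>B. \<exists>a\<in>S. R a b}. \<exists>a\<in>T. R a b}"
proof -
  let ?N = "\<lambda>B S. {b\<in>B. \<exists>a\<in>S. R a b}"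
  have "card T + card S = card (T \<union> S)"
    by (rule card_Un_disjoint[symmetric]) (use T S A in \<open>auto intro: finite_subset\<close>)
  also have "\<dots> \<le> card (?N B (T \<union> S))"
    using T S by (intro hall) auto
  also have "\<dots> \<le> card (?N (B - ?N B S) T \<union> ?N B S)"
    using B by (intro card_mono) auto
  also have "\<dots> \<le> card (?N (B - ?N B S) T) + card (?N B S)"
    by (rule card_Un_le)
  finally show ?thesis
    using tight by linarith
qed

lemma card_le_neighbours_Diff_edge:
  assumes B: "finite B" and a: "a \<in> A"
    and surplus: "\<And>S. S \<noteq> {} \<Longrightarrow> S \<subset> A \<Longrightarrow> card S < card {b\<in>B. \<exists>a\<in>S. R a b}"
    and T: "T \<subseteq> A - {a}"
  shows "card T \<le> card {b' \<in> B - {b}. \<exists>a\<in>T. R a b'}"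
proof (cases "T = {}")
  case False
  moreover have "T \<subset> A"
    using T a by blast
  ultimately have "card T < card {b\<in>B. \<exists>a\<in>T. R a b}"
    by (rule surplus)
  moreover have "card {b\<in>B. \<exists>a\<in>T. R a b} - card {b} \<le> card {b' \<in> B - {b}. \<exists>a\<in>T. R a b'}"
    using diff_card_le_card_Diff[of "{b}" "{b\<in>B. \<exists>a\<in>T. R a b}"] by (simp add: set_diff_eq conj_ac)
  ultimately show ?thesis
    by simp
qed simp

text \<open>Either some nonempty proper \<open>S \<subset> A\<close> is tight, and then \<open>S\<close> is matched into its
  neighbourhood and \<open>A - S\<close> outside of it; or every such \<open>S\<close> has a surplus neighbour, and
  any single edge can start the matching.\<close>
theorem Hall_marriage:
  fixes R :: "'a \<Rightarrow> 'b \<Rightarrow> bool"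
  assumes "finite A" and "finite B"
    and "\<And>S. S \<subseteq> A \<Longrightarrow> card S \<le> card {b\<in>B. \<exists>a\<in>S. R a b}"
  shows "\<exists>f. inj_on f A \<and> (\<forall>a\<in>A. f a \<in> B \<and> R a (f a))"
  using assms
proof (induction "card A" arbitrary: A B rule: less_induct)
  case less
  let ?N = "\<lambda>B S. {b\<in>B. \<exists>a\<in>S. R a b}"
  show ?case
  proof (cases "\<exists>S. S \<noteq> {} \<and> S \<subset> A \<and> card (?N B S) \<le> card S")
    case True
    then obtain S where S: "S \<noteq> {}" "S \<subset> A" "card (?N B S) \<le> card S" by blast
    have "\<exists>f. inj_on f S \<and> (\<forall>a\<in>S. f a \<in> B \<and> R a (f a))"
    proof (rule less.hyps[OF _ _ less.prems(2)])
      show "card S < card A" "finite S"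
        using less.prems(1) S(2) by (auto intro: psubset_card_mono finite_subset)
      show "card S' \<le> card (?N B S')" if "S' \<subseteq> S" for S'
        using that S(2) by (intro less.prems(3)) auto
    qed
    then obtain f where f: "inj_on f S" "\<forall>a\<in>S. f a \<in> ?N B S \<and> R a (f a)"
      by blast
    have "\<exists>g. inj_on g (A - S) \<and> (\<forall>a\<in>A - S. g a \<in> B - ?N B S \<and> R a (g a))"
    proof (rule less.hyps)
      show "card (A - S) < card A"
        by (rule psubset_card_mono[OF less.prems(1)]) (use S(1,2) in blast)
      show "finite (A - S)" "finite (B - ?N B S)"
        using less.prems(1,2) by auto
      show "card T \<le> card (?N (B - ?N B S) T)" if "T \<subseteq> A - S" for T
        using less.prems(2,1) psubset_imp_subset[OF S(2)] less.prems(3) S(3) that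
        by (rule card_le_neighbours_Diff_tight)
    qed
    then obtain g where g: "inj_on g (A - S)" "\<forall>a\<in>A - S. g a \<in> B - ?N B S \<and> R a (g a)"
      by blast
    have "S \<union> (A - S) = A" using S(2) by blast
    then show ?thesis
      using matching_Un[OF f g] by auto
  next
    case no_tight_set: False
    show ?thesis
    proof (cases "A = {}")
      case False
      then obtain a where a: "a \<in> A" by blast
      then have "?N B {a} \<noteq> {}"
        using less.prems(3)[of "{a}"] by (auto simp: Suc_le_eq card_gt_0_iff)
      then obtain b where b: "b \<in> B" "R a b" by blast
      have "\<exists>g. inj_on g (A - {a}) \<and> (\<forall>a'\<in>A - {a}. g a' \<in> B - {b} \<and> R a' (g a'))"
      proof (rule less.hyps)
        show "card (A - {a}) < card A"
          by (rule psubset_card_mono[OF less.prems(1)]) (use a in blast)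
        show "card T \<le> card (?N (B - {b}) T)" if "T \<subseteq> A - {a}" for T
        proof (rule card_le_neighbours_Diff_edge[OF less.prems(2) a _ that])
          show "card S < card (?N B S)" if "S \<noteq> {}" "S \<subset> A" for S
            using no_tight_set that not_le by blast
        qed
      qed (use less.prems(1,2) in auto)
      then obtain g where g: "inj_on g (A - {a})" "\<forall>a'\<in>A - {a}. g a' \<in> B - {b} \<and> R a' (g a')"
        by blast
      have "\<exists>h. inj_on h ({a} \<union> (A - {a}))
          \<and> (\<forall>a'\<in>{a} \<union> (A - {a}). h a' \<in> {b} \<union> (B - {b}) \<and> R a' (h a'))"
        by (rule matching_Un[where f="\<lambda>_. b"]) (use b g in auto)
      moreover have "{a} \<union> (A - {a}) = A" "{b} \<union> (B - {b}) = B"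
        using a b by auto
      ultimately show ?thesis by (simp only:)
    qed simp
  qed
qed

section \<open>Down-sets of the bipath poset\<close>

lemma shift_shift: "shift d (shift e b) = shift (d + e) b"
  by (cases b) auto

lemma bp_le_shift: "bp_le b b' \<Longrightarrow> bp_le (shift e b) (shift e b')"
  by (cases b; cases b') auto

lemma bp_le_shift_self: "0 \<le> e \<Longrightarrow> bp_le b (shift e b)"
  by (cases b) auto

lemma bp_le_PosInf: "bp_le b PosInf"
  by (cases b) auto

lemma Lset_NegInf: "D \<in> Lset \<Longrightarrow> NegInf \<in> D"
  by (simp add: Lset_def)

lemma Lset_down_closed: "D \<in> Lset \<Longrightarrow> bp_le b b' \<Longrightarrow> b' \<in> D \<Longrightarrow> b \<in> D"
  unfolding Lset_def bp_interval_def bp_convex_def using bp_le.simps(1) by blast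

lemma Lset_PosInf: "D \<in> Lset \<Longrightarrow> PosInf \<notin> D"
  using Lset_down_closed[of D _ PosInf] bp_le_PosInf by (auto simp: Lset_def)

definition down_closed :: "real set \<Rightarrow> bool" where
  "down_closed X \<longleftrightarrow> (\<forall>t\<in>X. \<forall>s\<le>t. s \<in> X)"

definition branch :: "bipath set \<Rightarrow> bidx \<Rightarrow> real set" where
  "branch D i = {t. Pt t i \<in> D}"

lemma down_closed_branch: "D \<in> Lset \<Longrightarrow> down_closed (branch D i)"
  unfolding down_closed_def branch_def by (auto intro: Lset_down_closed[of D "Pt _ i" "Pt _ i"])

lemma down_closed_less: "down_closed X \<Longrightarrow> t \<in> X \<Longrightarrow> u \<notin> X \<Longrightarrow> t < u"
  unfolding down_closed_def by (meson not_le less_imp_le)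

lemma down_closed_bdd_above: "down_closed X \<Longrightarrow> X \<noteq> UNIV \<Longrightarrow> bdd_above X"
proof -
  assume X: "down_closed X" "X \<noteq> UNIV"
  then obtain u where "u \<notin> X" by blast
  then show "bdd_above X"
    using down_closed_less[OF X(1) _ \<open>u \<notin> X\<close>] by (intro bdd_aboveI[of _ u]) (simp add: less_imp_le)
qed

text \<open>A down-closed set of reals is empty, everything, or a ray ending at \<open>Sup X\<close>, open or
  closed.  Its potential records that end point, with \<open>\<plusminus>M\<close> standing in for the two degenerate
  cases, and breaks ties by closedness.  The potential of an interval of \<open>L\<close> adds up its two
  branches; this is only monotone if \<open>M\<close> dominates \<open>\<bar>Sup X\<bar> + e\<close> on every proper branch
  involved, which is what the hypotheses on \<open>\<bar>level 0 X\<bar> + e\<close> express.\<close>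
definition level :: "real \<Rightarrow> real set \<Rightarrow> real" where
  "level M X = (if X = UNIV then M else if X = {} then - M else Sup X)"

definition branch_potential :: "real \<Rightarrow> real set \<Rightarrow> real \<times> nat" where
  "branch_potential M X = (level M X, of_bool (X \<noteq> {} \<and> X \<noteq> UNIV \<and> Sup X \<in> X))"

definition potential :: "real \<Rightarrow> bipath set \<Rightarrow> real \<times> nat" where
  "potential M D = branch_potential M (branch D One) + branch_potential M (branch D Two)"

lemma branch_potential_le_shift:
  assumes X: "down_closed X" and Y: "down_closed Y" and XY: "\<And>t. t + e \<in> X \<Longrightarrow> t \<in> Y"
    and MX: "\<bar>level 0 X\<bar> + e < M" and MY: "\<bar>level 0 Y\<bar> + e < M" and e: "0 \<le> e"
  shows "branch_potential M X \<le> branch_potential M Y + (e, 0)"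
proof (cases "X = {} \<or> X = UNIV")
  case True
  moreover have "X = UNIV \<Longrightarrow> Y = UNIV"
    using XY by blast
  ultimately show ?thesis
    using MY e by (auto simp: branch_potential_def level_def split: if_splits)
next
  case False
  then obtain x where "x \<in> X" and XU: "X \<noteq> UNIV" and XE: "X \<noteq> {}" by blast
  then have YE: "Y \<noteq> {}"
    using XY by (metis diff_add_cancel empty_iff)
  show ?thesis
  proof (cases "Y = UNIV")
    case True
    then show ?thesis
      using MX XU XE e by (auto simp: branch_potential_def level_def)
  next
    case YU: False
    have Sup_le: "Sup X \<le> Sup Y + e"
    proof (rule cSup_least[OF XE])
      fix t assume "t \<in> X"
      then have "t - e \<le> Sup Y"
        using XY cSup_upper[OF _ down_closed_bdd_above[OF Y YU]] by (metis diff_add_cancel)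
      then show "t \<le> Sup Y + e" by simp
    qed
    have "Sup X \<in> X \<Longrightarrow> Sup X - e \<in> Y"
      using XY by (metis diff_add_cancel)
    then show ?thesis
      using Sup_le XU XE YU YE by (auto simp: branch_potential_def level_def)
  qed
qed

lemma branch_potential_less_shift:
  assumes X: "down_closed X" and Y: "down_closed Y"
    and wit: "t + e \<in> Y" "t \<notin> X"
    and MX: "\<bar>level 0 X\<bar> + e < M" and MY: "\<bar>level 0 Y\<bar> + e < M" and e: "0 \<le> e"
  shows "branch_potential M X + (e, 0) < branch_potential M Y"
proof (cases "X = {}")
  case True
  have "Y \<noteq> {}" using wit by auto
  then show ?thesis
    using True MY e by (cases "Y = UNIV") (auto simp: branch_potential_def level_def)
next
  case XE: False
  have XU: "X \<noteq> UNIV" using wit by auto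
  have Sup_le: "Sup X \<le> t"
    using XE wit(2) by (intro cSup_least) (auto dest: down_closed_less[OF X])
  show ?thesis
  proof (cases "Y = UNIV")
    case True
    then show ?thesis
      using MX XE XU Sup_le by (auto simp: branch_potential_def level_def)
  next
    case YU: False
    have "t + e \<le> Sup Y"
      using cSup_upper[OF wit(1) down_closed_bdd_above[OF Y YU]] .
    then have "Sup X + e < Sup Y \<or> Sup X = t \<and> Sup Y = t + e"
      using Sup_le by linarith
    then show ?thesis
      using XE XU YU wit by (auto simp: branch_potential_def level_def)
  qed
qed

lemma lex_add_le_less:
  fixes x y x' y' d :: "real \<times> nat"
  assumes "x \<le> y + d" and "x' + d < y'"
  shows "x + x' < y + y'"
  using assms by (cases x; cases y; cases x'; cases y'; cases d) (auto simp: less_eq_prod_def)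

lemma potential_less:
  assumes D: "D \<in> Lset" and E: "E \<in> Lset" and e: "0 \<le> e"
    and MD: "\<And>i. \<bar>level 0 (branch D i)\<bar> + e < M" and ME: "\<And>i. \<bar>level 0 (branch E i)\<bar> + e < M"
    and DE: "shift e -` D \<subseteq> E" and ED: "\<not> shift e -` E \<subseteq> D"
  shows "potential M D < potential M E"
proof -
  have XY: "\<And>t. t + e \<in> branch D i \<Longrightarrow> t \<in> branch E i" for i
    using DE by (auto simp: branch_def)
  obtain b where b: "shift e b \<in> E" "b \<notin> D"
    using ED by blast
  obtain t p where bt: "b = Pt t p"
    using b Lset_NegInf[OF D] Lset_PosInf[OF E] by (cases b) auto
  obtain q where pq: "\<And>f :: bidx \<Rightarrow> real \<times> nat. f One + f Two = f p + f q"
    by (cases p) (auto intro: add.commute)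
  have "branch_potential M (branch D q) \<le> branch_potential M (branch E q) + (e, 0)"
    using down_closed_branch[OF D] down_closed_branch[OF E] XY MD ME e
    by (rule branch_potential_le_shift)
  moreover have "branch_potential M (branch D p) + (e, 0) < branch_potential M (branch E p)"
    using down_closed_branch[OF D] down_closed_branch[OF E] _ _ MD ME e
    by (rule branch_potential_less_shift) (use b bt in \<open>auto simp: branch_def\<close>)
  ultimately show ?thesis
    unfolding potential_def pq[of "\<lambda>i. branch_potential M (branch D i)"]
      pq[of "\<lambda>i. branch_potential M (branch E i)"]
    by (metis lex_add_le_less add.commute)
qed

lemma finite_Lset_potential:
  assumes "finite \<D>" "\<D> \<subseteq> Lset" "0 \<le> e"
  obtains p :: "bipath set \<Rightarrow> real \<times> nat" where
    "\<And>D E. D \<in> \<D> \<Longrightarrow> E \<in> \<D> \<Longrightarrow> shift e -` D \<subseteq> E \<Longrightarrow> \<not> shift e -` E \<subseteq> D \<Longrightarrow> p D < p E"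
proof
  define M where "M = e + 1 + (\<Sum>D\<in>\<D>. \<bar>level 0 (branch D One)\<bar> + \<bar>level 0 (branch D Two)\<bar>)"
  have "\<bar>level 0 (branch D i)\<bar> + e < M" if "D \<in> \<D>" for D i
  proof -
    have "\<bar>level 0 (branch D i)\<bar> \<le> \<bar>level 0 (branch D One)\<bar> + \<bar>level 0 (branch D Two)\<bar>"
      by (cases i) auto
    also have "\<dots> \<le> (\<Sum>D\<in>\<D>. \<bar>level 0 (branch D One)\<bar> + \<bar>level 0 (branch D Two)\<bar>)"
      using assms(1) that by (intro member_le_sum) auto
    finally show ?thesis unfolding M_def by linarith
  qed
  then show "potential M D < potential M E"
    if "D \<in> \<D>" "E \<in> \<D>" "shift e -` D \<subseteq> E" "\<not> shift e -` E \<subseteq> D" for D E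
    using that assms by (intro potential_less) auto
qed

section \<open>Interval decompositions\<close>

locale interval_decomposition = vector_space s
  for s :: "'k::field \<Rightarrow> 'v::ab_group_add \<Rightarrow> 'v" (infixr \<open>*s\<close> 75) +
  fixes V :: "'v pmod" and J :: "'j set" and U :: "'j \<Rightarrow> bipath \<Rightarrow> 'v set" and I :: "'j \<Rightarrow> bipath set"
  assumes pfd: "is_pfd s V" and decomposition: "interval_decomp s V J U I"
begin

abbreviation JL :: "'j set" where "JL \<equiv> BL J I"

lemma structure_map_lin: "bp_le b b' \<Longrightarrow> lin_on s s (fst V b) (fst V b') (snd V b b')"
  using pfd by (simp add: is_pfd_def is_pmod_def)

lemma structure_map_scale: "bp_le b b' \<Longrightarrow> x \<in> fst V b \<Longrightarrow> snd V b b' (c *s x) = c *s snd V b b' x"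
  using structure_map_lin unfolding lin_on_def by blast

lemma structure_map_id: "x \<in> fst V b \<Longrightarrow> snd V b b x = x"
  using pfd by (simp add: is_pfd_def is_pmod_def)

lemma structure_map_comp:
  "bp_le b b' \<Longrightarrow> bp_le b' b'' \<Longrightarrow> x \<in> fst V b \<Longrightarrow> snd V b' b'' (snd V b b' x) = snd V b b'' x"
  using pfd unfolding is_pfd_def is_pmod_def by blast

lemma subspace_fst: "subspace (fst V b)"
  using pfd by (simp add: is_pfd_def is_pmod_def)

lemma summand_subspace: "j \<in> J \<Longrightarrow> subspace (U j b)"
  using decomposition by (simp add: interval_decomp_def submod_def)

lemma summand_le: "j \<in> J \<Longrightarrow> U j b \<subseteq> fst V b"
  using decomposition unfolding interval_decomp_def submod_def by blast

lemma summand_structure_map: "j \<in> J \<Longrightarrow> bp_le b b' \<Longrightarrow> x \<in> U j b \<Longrightarrow> snd V b b' x \<in> U j b'"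
  using decomposition unfolding interval_decomp_def submod_def by blast

text \<open>For \<open>j \<in> JL\<close> the interval contains \<open>-\<infinity>\<close>, and \<open>gen j\<close> is the vector of
  coordinate \<open>1\<close> there; its images \<open>gen_at j b\<close> span the summand at every \<open>b\<close>.\<close>
definition coord :: "'j \<Rightarrow> bipath \<Rightarrow> 'v \<Rightarrow> 'k" where
  "coord j = (SOME \<phi>. is_hom s (*) (U j, snd V) (interval_mod (I j)) \<phi>
      \<and> (\<forall>b. bij_betw (\<phi> b) (U j b) (fst (interval_mod (I j) :: 'k pmod) b)))"

lemma coord_iso:
  assumes "j \<in> J"
  shows "is_hom s (*) (U j, snd V) (interval_mod (I j)) (coord j)"
    and "bij_betw (coord j b) (U j b) (if b \<in> I j then UNIV else {0})"
proof -
  have "\<exists>\<phi>. is_hom s (*) (U j, snd V) (interval_mod (I j)) \<phi>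
      \<and> (\<forall>b. bij_betw (\<phi> b) (U j b) (fst (interval_mod (I j) :: 'k pmod) b))"
    using decomposition assms by (simp add: interval_decomp_def iso_pmod_def)
  then have "is_hom s (*) (U j, snd V) (interval_mod (I j)) (coord j)
      \<and> (\<forall>b. bij_betw (coord j b) (U j b) (fst (interval_mod (I j) :: 'k pmod) b))"
    unfolding coord_def by (rule someI_ex)
  then show "is_hom s (*) (U j, snd V) (interval_mod (I j)) (coord j)"
    and "bij_betw (coord j b) (U j b) (if b \<in> I j then UNIV else {0})"
    by (auto simp: interval_mod_def)
qed

lemma coord_add: "j \<in> J \<Longrightarrow> x \<in> U j b \<Longrightarrow> y \<in> U j b \<Longrightarrow> coord j b (x + y) = coord j b x + coord j b y"
  using coord_iso(1) unfolding is_hom_def lin_on_def by auto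

lemma coord_scale: "j \<in> J \<Longrightarrow> x \<in> U j b \<Longrightarrow> coord j b (c *s x) = c * coord j b x"
  using coord_iso(1) unfolding is_hom_def lin_on_def by auto

lemma coord_structure_map:
  assumes "j \<in> J" "bp_le b b'" "x \<in> U j b" "b \<in> I j" "b' \<in> I j"
  shows "coord j b' (snd V b b' x) = coord j b x"
proof -
  have "\<forall>b b'. bp_le b b' \<longrightarrow> (\<forall>x\<in>U j b.
      (if b \<in> I j \<and> b' \<in> I j then id else (\<lambda>_. 0)) (coord j b x) = coord j b' (snd V b b' x))"
    using coord_iso(1)[OF assms(1)] by (simp add: is_hom_def interval_mod_def)
  then have "(if b \<in> I j \<and> b' \<in> I j then id else (\<lambda>_. 0)) (coord j b x) = coord j b' (snd V b b' x)"
    using assms(2,3) by blast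
  then show ?thesis
    using assms(4,5) by simp
qed

lemma coord_inj: "j \<in> J \<Longrightarrow> x \<in> U j b \<Longrightarrow> y \<in> U j b \<Longrightarrow> coord j b x = coord j b y \<Longrightarrow> x = y"
  using coord_iso(2)[of j b] by (auto simp: bij_betw_def dest: inj_onD)

lemma summand_zero_outside:
  assumes "j \<in> J" "b \<notin> I j" "x \<in> U j b"
  shows "x = 0"
proof -
  have "0 \<in> U j b"
    using assms(1) by (rule subspace_0[OF summand_subspace])
  moreover have "coord j b ` U j b = {0}"
    using coord_iso(2)[OF assms(1), of b] assms(2) by (simp add: bij_betw_def)
  ultimately have "coord j b 0 = coord j b x"
    using imageI[of x "U j b" "coord j b"] imageI[of 0 "U j b" "coord j b"] assms(3) by simp
  then show ?thesis
    using coord_inj[OF assms(1) \<open>0 \<in> U j b\<close> assms(3)] by simp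
qed

definition gen :: "'j \<Rightarrow> 'v" where
  "gen j = inv_into (U j NegInf) (coord j NegInf) 1"

definition gen_at :: "'j \<Rightarrow> bipath \<Rightarrow> 'v" where
  "gen_at j b = snd V NegInf b (gen j)"

lemma JL_J: "j \<in> JL \<Longrightarrow> j \<in> J"
  by (simp add: BL_def)

lemma JL_NegInf: "j \<in> JL \<Longrightarrow> NegInf \<in> I j"
  by (simp add: BL_def Lset_def)

lemma gen_in_summand: "j \<in> JL \<Longrightarrow> gen j \<in> U j NegInf"
  and coord_gen: "j \<in> JL \<Longrightarrow> coord j NegInf (gen j) = 1"
  using coord_iso(2)[OF JL_J, of j NegInf] JL_NegInf[of j] unfolding gen_def
  by (simp_all add: bij_betw_def inv_into_into f_inv_into_f)

lemma gen_in_fst: "j \<in> JL \<Longrightarrow> gen j \<in> fst V NegInf"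
  using gen_in_summand summand_le[OF JL_J] by blast

lemma gen_at_in: "j \<in> JL \<Longrightarrow> gen_at j b \<in> U j b"
  unfolding gen_at_def using gen_in_summand summand_structure_map[OF JL_J] by simp

lemma gen_at_NegInf: "j \<in> JL \<Longrightarrow> gen_at j NegInf = gen j"
  unfolding gen_at_def using structure_map_id gen_in_fst by simp

lemma structure_map_gen_at: "j \<in> JL \<Longrightarrow> bp_le b b' \<Longrightarrow> snd V b b' (gen_at j b) = gen_at j b'"
  unfolding gen_at_def using structure_map_comp[of NegInf b b' "gen j"] gen_in_fst by simp

lemma structure_map_scale_gen_at:
  "j \<in> JL \<Longrightarrow> bp_le b b' \<Longrightarrow> snd V b b' (c *s gen_at j b) = c *s gen_at j b'"
  using structure_map_scale[OF _ subsetD[OF summand_le[OF JL_J] gen_at_in]] structure_map_gen_at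
  by simp

lemma coord_scale_gen_at:
  assumes "j \<in> JL"
  shows "coord j b (c *s gen_at j b) = (if b \<in> I j then c else 0)"
proof (cases "b \<in> I j")
  case True
  then have "coord j b (gen_at j b) = 1"
    using coord_structure_map[OF JL_J[OF assms], of NegInf b "gen j"] gen_in_summand[OF assms] coord_gen[OF assms] JL_NegInf[OF assms]
    by (simp add: gen_at_def)
  then show ?thesis
    using True coord_scale[OF JL_J[OF assms] gen_at_in[OF assms]] by simp
next
  case False
  then show ?thesis
    using coord_iso(2)[OF JL_J[OF assms], of b] gen_at_in[OF assms] subspace_scale[OF summand_subspace[OF JL_J[OF assms]]]
    unfolding bij_betw_def by auto
qed

lemma gen_at_eq_0_iff:
  assumes "j \<in> JL"
  shows "gen_at j b = 0 \<longleftrightarrow> b \<notin> I j"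
proof
  assume "gen_at j b = 0"
  then have "coord j b (0 *s gen_at j b) = coord j b (1 *s gen_at j b)"
    by simp
  then show "b \<notin> I j"
    using coord_scale_gen_at[OF assms, of b 0] coord_scale_gen_at[OF assms, of b 1]
    by (auto split: if_splits)
next
  assume "b \<notin> I j"
  then show "gen_at j b = 0"
    using summand_zero_outside[OF JL_J[OF assms] _ gen_at_in[OF assms]] by blast
qed

lemma summand_eq_scale_gen_at:
  assumes "j \<in> JL" and x: "x \<in> U j b"
  shows "x = coord j b x *s gen_at j b"
proof (cases "b \<in> I j")
  case True
  show ?thesis
  proof (rule coord_inj[OF JL_J[OF assms(1)] x])
    show "coord j b x *s gen_at j b \<in> U j b"
      using assms by (intro subspace_scale[OF summand_subspace] gen_at_in JL_J)
    show "coord j b x = coord j b (coord j b x *s gen_at j b)"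
      using coord_scale_gen_at[OF assms(1)] True by simp
  qed
next
  case False
  then have "x = 0" "gen_at j b = 0"
    using summand_zero_outside[OF JL_J[OF assms(1)] False] x gen_at_in[OF assms(1)] by auto
  then show ?thesis by simp
qed

lemma sum_gen_at_eq_0D:
  assumes F: "F \<subseteq> JL" "finite F" and sum: "(\<Sum>k\<in>F. c k *s gen_at k b) = 0"
    and k: "k \<in> F" "b \<in> I k"
  shows "c k = 0"
proof -
  have indep: "indep_family J U b"
    using decomposition by (simp add: interval_decomp_def)
  have "c k *s gen_at k b = 0"
  proof (rule indep[unfolded indep_family_def, rule_format, of F "\<lambda>k. c k *s gen_at k b" k])
    show "finite F \<and> F \<subseteq> J \<and> (\<forall>k\<in>F. c k *s gen_at k b \<in> U k b) \<and> (\<Sum>k\<in>F. c k *s gen_at k b) = 0"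
      using F sum JL_J subspace_scale[OF summand_subspace[OF JL_J] gen_at_in] by auto
  qed (rule k(1))
  then show ?thesis
    using k F(1) gen_at_eq_0_iff[of k b] by auto
qed

lemma sum_gen_eq_0D: "finite F \<Longrightarrow> F \<subseteq> JL \<Longrightarrow> (\<Sum>j\<in>F. c j *s gen j) = 0 \<Longrightarrow> \<forall>j\<in>F. c j = 0"
  using sum_gen_at_eq_0D[of F c NegInf] gen_at_NegInf JL_NegInf by (simp add: subset_iff)

lemma finite_JL: "finite JL"
proof -
  have inj: "inj_on gen JL" and indep: "independent (gen ` JL)"
    using inj_on_independent_image[of JL gen] sum_gen_eq_0D by blast+
  obtain S where S: "finite S" "span S = fst V NegInf"
    using pfd unfolding is_pfd_def by blast
  have "gen ` JL \<subseteq> span S"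
    using gen_in_fst S(2) by auto
  then have "finite (gen ` JL)"
    using independent_span_bound[OF S(1) indep] by blast
  then show ?thesis
    using inj by (simp add: finite_image_iff)
qed

lemma zero_in_sum_set: "0 \<in> sum_set JL U b"
  unfolding sum_set_def by (intro CollectI exI[of _ "{}"]) auto

lemma sum_set_NegInf_iff: "x \<in> sum_set JL U NegInf \<longleftrightarrow> (\<exists>c. x = (\<Sum>j\<in>JL. c j *s gen j))"
proof
  assume "x \<in> sum_set JL U NegInf"
  then obtain F u where F: "x = sum u F" "finite F" "F \<subseteq> JL" "\<forall>j\<in>F. u j \<in> U j NegInf"
    unfolding sum_set_def by blast
  define c where "c j = (if j \<in> F then coord j NegInf (u j) else 0)" for j
  have "(\<Sum>j\<in>JL. c j *s gen j) = (\<Sum>j\<in>F. u j)"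
  proof (rule sum.mono_neutral_cong_right[OF finite_JL F(3)])
    show "\<forall>j\<in>JL - F. c j *s gen j = 0"
      by (simp add: c_def)
    show "c j *s gen j = u j" if "j \<in> F" for j
      using summand_eq_scale_gen_at[of j "u j" NegInf] gen_at_NegInf that F(3,4) by (auto simp: c_def)
  qed
  then show "\<exists>c. x = (\<Sum>j\<in>JL. c j *s gen j)"
    using F(1) by metis
next
  assume "\<exists>c. x = (\<Sum>j\<in>JL. c j *s gen j)"
  then obtain c where "x = (\<Sum>j\<in>JL. c j *s gen j)" by blast
  moreover have "\<forall>j\<in>JL. c j *s gen j \<in> U j NegInf"
    using gen_in_summand by (auto intro: subspace_scale[OF summand_subspace[OF JL_J]])
  ultimately show "x \<in> sum_set JL U NegInf"
    unfolding sum_set_def using finite_JL by blast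
qed

lemma subspace_sum_set_NegInf: "subspace (sum_set JL U NegInf)"
proof (rule subspaceI)
  show "0 \<in> sum_set JL U NegInf"
    by (rule zero_in_sum_set)
  show "x + y \<in> sum_set JL U NegInf" if xy: "x \<in> sum_set JL U NegInf" "y \<in> sum_set JL U NegInf" for x y
  proof -
    obtain c d where "x = (\<Sum>j\<in>JL. c j *s gen j)" "y = (\<Sum>j\<in>JL. d j *s gen j)"
      using xy unfolding sum_set_NegInf_iff by blast
    then have "x + y = (\<Sum>j\<in>JL. (c j + d j) *s gen j)"
      by (simp add: scale_left_distrib sum.distrib)
    then show ?thesis
      unfolding sum_set_NegInf_iff by (rule exI[where P="\<lambda>c. x + y = (\<Sum>j\<in>JL. c j *s gen j)"])
  qed
  show "a *s x \<in> sum_set JL U NegInf" if x: "x \<in> sum_set JL U NegInf" for a x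
  proof -
    obtain c where "x = (\<Sum>j\<in>JL. c j *s gen j)"
      using x unfolding sum_set_NegInf_iff by blast
    then have "a *s x = (\<Sum>j\<in>JL. (a * c j) *s gen j)"
      by (simp add: scale_sum_right)
    then show ?thesis
      unfolding sum_set_NegInf_iff by (rule exI[where P="\<lambda>c. a *s x = (\<Sum>j\<in>JL. c j *s gen j)"])
  qed
qed

lemma gen_in_sum_set: "j \<in> JL \<Longrightarrow> gen j \<in> sum_set JL U NegInf"
  unfolding sum_set_def using gen_in_summand by (intro CollectI exI[of _ "{j}"] exI[of _ "\<lambda>_. gen j"]) auto

lemma summand_significant:
  assumes "j \<in> JL"
  shows "\<not> shift_trivial t (U j, snd V)"
proof -
  have "transl t (U j, snd V) NegInf (gen j) = gen j"
    using gen_at_NegInf[OF assms] by (simp add: transl_def gen_at_def)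
  moreover have "gen j \<noteq> 0"
    using gen_at_eq_0_iff[OF assms, of NegInf] gen_at_NegInf[OF assms] JL_NegInf[OF assms] by simp
  ultimately show ?thesis
    using gen_in_summand[OF assms] unfolding shift_trivial_def by (metis fst_conv)
qed

lemma sum_gen_inject:
  assumes "(\<Sum>j\<in>JL. c j *s gen j) = (\<Sum>j\<in>JL. d j *s gen j)" "j \<in> JL"
  shows "c j = d j"
proof -
  have "(\<Sum>j\<in>JL. (c j - d j) *s gen j) = 0"
    using assms(1) by (simp add: scale_left_diff_distrib sum_subtractf)
  then show ?thesis
    using sum_gen_eq_0D[OF finite_JL subset_refl] assms(2) by fastforce
qed

end


section \<open>Pairs of interval decompositions\<close>

lemma interleaved_sym: "interleaved s1 s2 e X Y \<Longrightarrow> interleaved s2 s1 e Y X"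
  unfolding interleaved_def by blast

definition shift_close :: "real \<Rightarrow> bipath set \<Rightarrow> bipath set \<Rightarrow> bool" where
  "shift_close e D E \<longleftrightarrow> shift e -` D \<subseteq> E \<and> shift e -` E \<subseteq> D"

text \<open>In coordinates, the morphism from one interval summand to the \<open>e\<close>-shift of another
  that sends generator to generator.\<close>
definition summand_map :: "('k \<Rightarrow> 'w \<Rightarrow> 'w) \<Rightarrow> real \<Rightarrow> (bipath \<Rightarrow> 'v \<Rightarrow> 'k) \<Rightarrow> (bipath \<Rightarrow> 'w)
    \<Rightarrow> bipath \<Rightarrow> 'v \<Rightarrow> 'w" where
  "summand_map s e \<phi> g b x = s (\<phi> b x) (g (shift e b))"

locale decomposition_pair =
  V: interval_decomposition sV V J UV IV + W: interval_decomposition sW W K UW IW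
  for sV :: "'k::field \<Rightarrow> 'v::ab_group_add \<Rightarrow> 'v" and V J and UV :: "'a \<Rightarrow> bipath \<Rightarrow> 'v set" and IV
    and sW :: "'k \<Rightarrow> 'w::ab_group_add \<Rightarrow> 'w" and W K and UW :: "'b \<Rightarrow> bipath \<Rightarrow> 'w set" and IW +
  fixes e :: real
  assumes e_nonneg: "0 \<le> e"
begin

lemma decomposition_pair_swap: "decomposition_pair sW W K UW IW sV V J UV IV e"
  by (intro decomposition_pair.intro decomposition_pair_axioms.intro
      W.interval_decomposition_axioms V.interval_decomposition_axioms e_nonneg)

lemma summand_map_hom:
  assumes j: "j \<in> V.JL" and k: "k \<in> W.JL" and sub: "shift e -` IW k \<subseteq> IV j"
  shows "is_hom sV sW (UV j, snd V) (pshift e (UW k, snd W)) (summand_map sW e (V.coord j) (W.gen_at k))"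
proof -
  let ?f = "summand_map sW e (V.coord j) (W.gen_at k)"
  have lin: "lin_on sV sW (UV j b) (UW k (shift e b)) (?f b)" for b
    unfolding lin_on_def summand_map_def
    using V.coord_add[OF V.JL_J[OF j]] V.coord_scale[OF V.JL_J[OF j]]
      W.subspace_scale[OF W.summand_subspace[OF W.JL_J[OF k]] W.gen_at_in[OF k]]
    by (auto simp: W.scale_left_distrib)
  have nat: "snd W (shift e b) (shift e b') (?f b x) = ?f b' (snd V b b' x)"
    if bb': "bp_le b b'" and x: "x \<in> UV j b" for b b' x
  proof -
    have "snd V b b' x = sV (V.coord j b x) (V.gen_at j b')"
      using V.summand_eq_scale_gen_at[OF j x] V.structure_map_scale_gen_at[OF j bb'] by metis
    moreover have "b' \<notin> IV j \<Longrightarrow> W.gen_at k (shift e b') = 0"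
      using sub W.gen_at_eq_0_iff[OF k] by blast
    ultimately show ?thesis
      unfolding summand_map_def
      using W.structure_map_scale_gen_at[OF k bp_le_shift[OF bb']] V.coord_scale_gen_at[OF j] by auto
  qed
  show ?thesis
    unfolding is_hom_def pshift_def using lin nat by simp
qed

lemma summand_map_roundtrip:
  assumes j: "j \<in> V.JL" and k: "k \<in> W.JL" and sub: "shift e -` IV j \<subseteq> IW k" and x: "x \<in> UV j b"
  shows "summand_map sV e (W.coord k) (V.gen_at j) (shift e b) (summand_map sW e (V.coord j) (W.gen_at k) b x)
    = snd V b (shift (2 * e) b) x"
proof -
  have shift2: "shift e (shift e b) = shift (2 * e) b"
    by (simp add: shift_shift)
  have "snd V b (shift (2 * e) b) x = sV (V.coord j b x) (V.gen_at j (shift (2 * e) b))"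
    using V.summand_eq_scale_gen_at[OF j x] V.structure_map_scale_gen_at[OF j bp_le_shift_self] e_nonneg
    by (metis mult_nonneg_nonneg zero_le_numeral)
  moreover have "shift e b \<notin> IW k \<Longrightarrow> V.gen_at j (shift (2 * e) b) = 0"
    using sub V.gen_at_eq_0_iff[OF j] shift2 by blast
  ultimately show ?thesis
    unfolding summand_map_def shift2 using W.coord_scale_gen_at[OF k] by auto
qed

lemma interleaved_summands:
  assumes j: "j \<in> V.JL" and k: "k \<in> W.JL" and close: "shift_close e (IV j) (IW k)"
  shows "interleaved sV sW e (UV j, snd V) (UW k, snd W)"
proof -
  interpret swap: decomposition_pair sW W K UW IW sV V J UV IV e
    by (rule decomposition_pair_swap)
  let ?\<alpha> = "summand_map sW e (V.coord j) (W.gen_at k)" and ?\<beta> = "summand_map sV e (W.coord k) (V.gen_at j)"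
  show ?thesis
    unfolding interleaved_def hshift_def transl_def
  proof (intro exI conjI)
    show "is_hom sV sW (UV j, snd V) (pshift e (UW k, snd W)) ?\<alpha>"
      using close by (intro summand_map_hom j k) (simp add: shift_close_def)
    show "is_hom sW sV (UW k, snd W) (pshift e (UV j, snd V)) ?\<beta>"
      using close by (intro swap.summand_map_hom j k) (simp add: shift_close_def)
    show "\<forall>b. \<forall>x\<in>fst (UV j, snd V) b. ?\<beta> (shift e b) (?\<alpha> b x) = snd (UV j, snd V) b (shift (2 * e) b) x"
      using close summand_map_roundtrip[OF j k] by (simp add: shift_close_def)
    show "\<forall>b. \<forall>x\<in>fst (UW k, snd W) b. ?\<alpha> (shift e b) (?\<beta> b x) = snd (UW k, snd W) b (shift (2 * e) b) x"
      using close swap.summand_map_roundtrip[OF k j] by (simp add: shift_close_def)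
  qed
qed

lemma hom_matrix:
  assumes \<alpha>: "is_hom sV sW (modL V J UV IV) (pshift e (modL W K UW IW)) \<alpha>"
  shows "\<exists>P. (\<forall>j\<in>V.JL. \<alpha> NegInf (V.gen j) = (\<Sum>k\<in>W.JL. sW (P j k) (W.gen k)))
    \<and> (\<forall>j\<in>V.JL. \<forall>k\<in>W.JL. P j k \<noteq> 0 \<longrightarrow> shift e -` IW k \<subseteq> IV j)"
proof -
  have lin: "lin_on sV sW (sum_set V.JL UV b) (sum_set W.JL UW (shift e b)) (\<alpha> b)" for b
    using \<alpha> by (simp add: is_hom_def modL_def pshift_def)
  have nat: "snd W (shift e b) (shift e b') (\<alpha> b x) = \<alpha> b' (snd V b b' x)"
    if "bp_le b b'" "x \<in> sum_set V.JL UV b" for b b' x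
    using \<alpha> that by (simp add: is_hom_def modL_def pshift_def)
  have "\<forall>j\<in>V.JL. \<exists>c. \<alpha> NegInf (V.gen j) = (\<Sum>k\<in>W.JL. sW (c k) (W.gen k))"
    using lin[of NegInf] V.gen_in_sum_set unfolding lin_on_def W.sum_set_NegInf_iff[symmetric] by auto
  then obtain P where P: "\<And>j. j \<in> V.JL \<Longrightarrow> \<alpha> NegInf (V.gen j) = (\<Sum>k\<in>W.JL. sW (P j k) (W.gen k))"
    by metis
  have supp: "shift e -` IW k \<subseteq> IV j" if j: "j \<in> V.JL" and k: "k \<in> W.JL" and "P j k \<noteq> 0" for j k
  proof
    fix b assume b: "b \<in> shift e -` IW k"
    have "(\<Sum>k\<in>W.JL. sW (P j k) (W.gen_at k (shift e b))) = snd W NegInf (shift e b) (\<alpha> NegInf (V.gen j))"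
      using W.lin_on_sum_scale[OF W.structure_map_lin W.subspace_fst W.finite_JL] W.gen_in_fst
      by (simp add: P[OF j] W.gen_at_def)
    also have "\<dots> = \<alpha> b (V.gen_at j b)"
      using nat[of NegInf b "V.gen j"] V.gen_in_sum_set[OF j] by (simp add: V.gen_at_def)
    finally have "V.gen_at j b = 0 \<Longrightarrow> (\<Sum>k\<in>W.JL. sW (P j k) (W.gen_at k (shift e b))) = 0"
      using lin_on_zero[OF lin V.zero_in_sum_set] by simp
    then show "b \<in> IV j"
      using W.sum_gen_at_eq_0D[OF subset_refl W.finite_JL _ k] b \<open>P j k \<noteq> 0\<close> V.gen_at_eq_0_iff[OF j] by auto
  qed
  show ?thesis
    using P supp by blast
qed

lemma coefficient_matrices_inverse:
  assumes g: "lin_on sW sV (sum_set W.JL UW NegInf) C g"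
    and gf: "\<forall>j\<in>V.JL. g (f (V.gen j)) = V.gen j"
    and P: "\<forall>j\<in>V.JL. f (V.gen j) = (\<Sum>k\<in>W.JL. sW (P j k) (W.gen k))"
    and Q: "\<forall>k\<in>W.JL. g (W.gen k) = (\<Sum>j\<in>V.JL. sV (Q k j) (V.gen j))"
    and j: "j \<in> V.JL" and j': "j' \<in> V.JL"
  shows "(\<Sum>k\<in>W.JL. P j k * Q k j') = of_bool (j = j')"
proof -
  have "(\<Sum>j'\<in>V.JL. sV (of_bool (j = j')) (V.gen j')) = (\<Sum>j'\<in>V.JL. if j = j' then V.gen j' else 0)"
    by (rule sum.cong) simp_all
  also have "\<dots> = g (f (V.gen j))"
    using j gf V.finite_JL by simp
  also have "\<dots> = (\<Sum>k\<in>W.JL. sV (P j k) (g (W.gen k)))"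
    using W.lin_on_sum_scale[OF g W.subspace_sum_set_NegInf W.finite_JL] W.gen_in_sum_set P j by simp
  also have "\<dots> = (\<Sum>k\<in>W.JL. \<Sum>j'\<in>V.JL. sV (P j k * Q k j') (V.gen j'))"
    using Q by (simp add: V.scale_sum_right)
  also have "\<dots> = (\<Sum>j'\<in>V.JL. sV (\<Sum>k\<in>W.JL. P j k * Q k j') (V.gen j'))"
    by (subst sum.swap) (simp add: V.scale_sum_left)
  finally have "of_bool (j = j') = (\<Sum>k\<in>W.JL. P j k * Q k j')"
    by (rule V.sum_gen_inject[OF _ j'])
  then show ?thesis by simp
qed

lemma interleaving_matrices:
  assumes "interleaved sV sW e (modL V J UV IV) (modL W K UW IW)"
  shows "\<exists>(P :: 'a \<Rightarrow> 'b \<Rightarrow> 'k) Q. (\<forall>j\<in>V.JL. \<forall>k\<in>W.JL. P j k \<noteq> 0 \<longrightarrow> shift e -` IW k \<subseteq> IV j)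
    \<and> (\<forall>j\<in>V.JL. \<forall>k\<in>W.JL. Q k j \<noteq> 0 \<longrightarrow> shift e -` IV j \<subseteq> IW k)
    \<and> (\<forall>j\<in>V.JL. \<forall>j'\<in>V.JL. (\<Sum>k\<in>W.JL. P j k * Q k j') = of_bool (j = j'))"
proof -
  interpret swap: decomposition_pair sW W K UW IW sV V J UV IV e
    by (rule decomposition_pair_swap)
  obtain \<alpha> \<beta> where \<alpha>: "is_hom sV sW (modL V J UV IV) (pshift e (modL W K UW IW)) \<alpha>"
    and \<beta>: "is_hom sW sV (modL W K UW IW) (pshift e (modL V J UV IV)) \<beta>"
    and \<beta>\<alpha>: "\<forall>b. \<forall>x\<in>fst (modL V J UV IV) b. hshift e \<beta> b (\<alpha> b x) = transl (2 * e) (modL V J UV IV) b x"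
    using assms unfolding interleaved_def by blast
  obtain P where P: "\<forall>j\<in>V.JL. \<alpha> NegInf (V.gen j) = (\<Sum>k\<in>W.JL. sW (P j k) (W.gen k))"
    and P_supp: "\<forall>j\<in>V.JL. \<forall>k\<in>W.JL. P j k \<noteq> 0 \<longrightarrow> shift e -` IW k \<subseteq> IV j"
    using hom_matrix[OF \<alpha>] by blast
  obtain Q where Q: "\<forall>k\<in>W.JL. \<beta> NegInf (W.gen k) = (\<Sum>j\<in>V.JL. sV (Q k j) (V.gen j))"
    and Q_supp: "\<forall>k\<in>W.JL. \<forall>j\<in>V.JL. Q k j \<noteq> 0 \<longrightarrow> shift e -` IV j \<subseteq> IW k"
    using swap.hom_matrix[OF \<beta>] by blast
  have "lin_on sW sV (sum_set W.JL UW b) (sum_set V.JL UV (shift e b)) (\<beta> b)" for b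
    using \<beta> by (simp add: is_hom_def modL_def pshift_def)
  then have \<beta>_lin: "lin_on sW sV (sum_set W.JL UW NegInf) (sum_set V.JL UV NegInf) (\<beta> NegInf)"
    by (metis shift.simps(2))
  have "\<beta> NegInf (\<alpha> NegInf (V.gen j)) = V.gen j" if "j \<in> V.JL" for j
    using \<beta>\<alpha>[rule_format, where b = NegInf and x = "V.gen j"] V.gen_in_sum_set[OF that]
      V.gen_in_fst[OF that] V.structure_map_id
    by (simp add: hshift_def transl_def modL_def)
  then have "\<forall>j\<in>V.JL. \<forall>j'\<in>V.JL. (\<Sum>k\<in>W.JL. P j k * Q k j') = of_bool (j = j')"
    using coefficient_matrices_inverse[OF \<beta>_lin _ P Q] by blast
  then show ?thesis
    using P_supp Q_supp by blast
qed

lemma hall_condition_shift_close: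
  assumes il: "interleaved sV sW e (modL V J UV IV) (modL W K UW IW)" and X: "X \<subseteq> V.JL"
  shows "card X \<le> card {k\<in>W.JL. \<exists>j\<in>X. shift_close e (IV j) (IW k)}"
proof -
  obtain P :: "'a \<Rightarrow> 'b \<Rightarrow> 'k" and Q :: "'b \<Rightarrow> 'a \<Rightarrow> 'k"
    where P: "\<forall>j\<in>V.JL. \<forall>k\<in>W.JL. P j k \<noteq> 0 \<longrightarrow> shift e -` IW k \<subseteq> IV j"
    and Q: "\<forall>j\<in>V.JL. \<forall>k\<in>W.JL. Q k j \<noteq> 0 \<longrightarrow> shift e -` IV j \<subseteq> IW k"
    and PQ: "\<forall>j\<in>V.JL. \<forall>j'\<in>V.JL. (\<Sum>k\<in>W.JL. P j k * Q k j') = of_bool (j = j')"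
    using interleaving_matrices[OF il] by blast
  have fin: "finite (IV ` V.JL \<union> IW ` W.JL)" and sub: "IV ` V.JL \<union> IW ` W.JL \<subseteq> Lset"
    using V.finite_JL W.finite_JL by (auto simp: BL_def)
  obtain p :: "bipath set \<Rightarrow> real \<times> nat"
    where p: "\<And>D E. D \<in> IV ` V.JL \<union> IW ` W.JL \<Longrightarrow> E \<in> IV ` V.JL \<union> IW ` W.JL \<Longrightarrow>
      shift e -` D \<subseteq> E \<Longrightarrow> \<not> shift e -` E \<subseteq> D \<Longrightarrow> p D < p E"
    using finite_Lset_potential[OF fin sub e_nonneg] by blast
  show ?thesis
  proof (rule card_le_neighbours_if_potential[OF V.finite_JL W.finite_JL _ _ _ X])
    show "(\<Sum>k\<in>W.JL. P j k * Q k j') = of_bool (j = j')" if "j \<in> V.JL" "j' \<in> V.JL" for j j'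
      using PQ that by blast
    show "p (IW k) < p (IV j)"
      if "j \<in> V.JL" "k \<in> W.JL" "P j k \<noteq> 0" "\<not> shift_close e (IV j) (IW k)" for j k
      using that P by (intro p) (auto simp: shift_close_def)
    show "p (IV j) < p (IW k)"
      if "j \<in> V.JL" "k \<in> W.JL" "Q k j \<noteq> 0" "\<not> shift_close e (IV j) (IW k)" for j k
      using that Q by (intro p) (auto simp: shift_close_def)
  qed
qed

lemma shift_close_matching:
  assumes il: "interleaved sV sW e (modL V J UV IV) (modL W K UW IW)"
  obtains \<sigma> where "bij_betw \<sigma> V.JL W.JL" and "\<And>j. j \<in> V.JL \<Longrightarrow> shift_close e (IV j) (IW (\<sigma> j))"
proof -
  interpret swap: decomposition_pair sW W K UW IW sV V J UV IV e
    by (rule decomposition_pair_swap)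
  obtain f where f: "inj_on f V.JL" "\<forall>j\<in>V.JL. f j \<in> W.JL \<and> shift_close e (IV j) (IW (f j))"
    using Hall_marriage[OF V.finite_JL W.finite_JL hall_condition_shift_close[OF il]] by blast
  obtain g where g: "inj_on g W.JL" "\<forall>k\<in>W.JL. g k \<in> V.JL"
    using Hall_marriage[OF W.finite_JL V.finite_JL swap.hall_condition_shift_close[OF interleaved_sym[OF il]]]
    by blast
  have "f ` V.JL = W.JL"
  proof (rule card_seteq[OF W.finite_JL])
    show "f ` V.JL \<subseteq> W.JL" using f(2) by blast
    have "card W.JL \<le> card V.JL"
      using card_inj_on_le[OF g(1) _ V.finite_JL] g(2) by blast
    then show "card W.JL \<le> card (f ` V.JL)"
      using card_image[OF f(1)] by simp
  qed
  then show thesis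
    using that f unfolding bij_betw_def by blast
qed

lemma interleaved_summands_matching:
  assumes "interleaved sV sW e (modL V J UV IV) (modL W K UW IW)"
  obtains \<sigma> where "bij_betw \<sigma> V.JL W.JL"
    and "\<And>j. j \<in> V.JL \<Longrightarrow> interleaved sV sW e (UV j, snd V) (UW (\<sigma> j), snd W)"
proof -
  obtain \<sigma> where \<sigma>: "bij_betw \<sigma> V.JL W.JL" and "\<And>j. j \<in> V.JL \<Longrightarrow> shift_close e (IV j) (IW (\<sigma> j))"
    using shift_close_matching[OF assms] by blast
  then have "\<And>j. j \<in> V.JL \<Longrightarrow> interleaved sV sW e (UV j, snd V) (UW (\<sigma> j), snd W)"
    using interleaved_summands bij_betwE by blast
  with \<sigma> that show thesis by blast
qed

end

lemma card_le_neighbours_if_bij: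
  assumes \<sigma>: "bij_betw \<sigma> A B" and R: "\<And>a. a \<in> A \<Longrightarrow> R a (\<sigma> a)" and X: "X \<subseteq> A" and B: "finite B"
  shows "card X \<le> card {b\<in>B. \<exists>a\<in>X. R a b}"
proof -
  have "inj_on \<sigma> X"
    using bij_betw_imp_inj_on[OF \<sigma>] X by (rule inj_on_subset)
  then have "card X = card (\<sigma> ` X)"
    by (rule card_image[symmetric])
  also have "\<dots> \<le> card {b\<in>B. \<exists>a\<in>X. R a b}"
    using B bij_betwE[OF \<sigma>] X R by (intro card_mono) auto
  finally show ?thesis .
qed

lemma card_le_neighbours_if_bij_converse:
  assumes \<sigma>: "bij_betw \<sigma> A B" and R: "\<And>a. a \<in> A \<Longrightarrow> R a (\<sigma> a)" and Y: "Y \<subseteq> B" and A: "finite A"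
  shows "card Y \<le> card {a\<in>A. \<exists>b\<in>Y. R a b}"
proof (rule card_le_neighbours_if_bij[OF bij_betw_inv_into[OF \<sigma>] _ Y A])
  fix b assume b: "b \<in> B"
  then have "inv_into A \<sigma> b \<in> A"
    using bij_betwE[OF bij_betw_inv_into[OF \<sigma>]] by blast
  then show "R (inv_into A \<sigma> b) b"
    using R bij_betw_inv_into_right[OF \<sigma> b] by fastforce
qed

theorem proposition4p15:
  fixes sV :: "'k::field \<Rightarrow> 'v::ab_group_add \<Rightarrow> 'v"
    and sW :: "'k \<Rightarrow> 'w::ab_group_add \<Rightarrow> 'w"
    and V :: "'v pmod" and W :: "'w pmod"
    and J :: "'a set" and UV :: "'a \<Rightarrow> bipath \<Rightarrow> 'v set" and IV :: "'a \<Rightarrow> bipath set"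
    and K :: "'b set" and UW :: "'b \<Rightarrow> bipath \<Rightarrow> 'w set" and IW :: "'b \<Rightarrow> bipath set"
    and e :: real
  assumes "vector_space sV" and "vector_space sW"
    and "is_pfd sV V" and "is_pfd sW W"
    and "interval_decomp sV V J UV IV" and "interval_decomp sW W K UW IW"
    and "0 \<le> e"
  shows "Bsig (2 * e) V (BL J IV) UV = BL J IV \<and> Bsig (2 * e) W (BL K IW) UW = BL K IW
    \<and> (interleaved sV sW e (modL V J UV IV) (modL W K UW IW) \<longrightarrow>
        (\<forall>X. X \<subseteq> Bsig (2 * e) V (BL J IV) UV \<and> finite X \<longrightarrow>
           (let NX = {k \<in> BL K IW. \<exists>j\<in>X. interleaved sV sW e (UV j, snd V) (UW k, snd W)}
            in infinite NX \<or> card X \<le> card NX))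
      \<and> (\<forall>Y. Y \<subseteq> Bsig (2 * e) W (BL K IW) UW \<and> finite Y \<longrightarrow>
           (let NY = {j \<in> BL J IV. \<exists>k\<in>Y. interleaved sV sW e (UV j, snd V) (UW k, snd W)}
            in infinite NY \<or> card Y \<le> card NY))
      \<and> (\<exists>J' K' \<sigma>. J' \<subseteq> BL J IV \<and> K' \<subseteq> BL K IW \<and> bij_betw \<sigma> J' K'
           \<and> (\<forall>j \<in> BL J IV - J'. shift_trivial (2 * e) (UV j, snd V))
           \<and> (\<forall>k \<in> BL K IW - K'. shift_trivial (2 * e) (UW k, snd W))
           \<and> (\<forall>j\<in>J'. interleaved sV sW e (UV j, snd V) (UW (\<sigma> j), snd W))))"
proof -
  interpret decomposition_pair sV V J UV IV sW W K UW IW e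
    using assms by (simp add: decomposition_pair_def decomposition_pair_axioms_def
        interval_decomposition_def interval_decomposition_axioms_def)
  let ?R = "\<lambda>j k. interleaved sV sW e (UV j, snd V) (UW k, snd W)"
  have "Bsig (2 * e) V V.JL UV = V.JL" "Bsig (2 * e) W W.JL UW = W.JL"
    using V.summand_significant W.summand_significant by (auto simp: Bsig_def)
  moreover have "(\<forall>X. X \<subseteq> V.JL \<longrightarrow> card X \<le> card {k \<in> W.JL. \<exists>j\<in>X. ?R j k})
      \<and> (\<forall>Y. Y \<subseteq> W.JL \<longrightarrow> card Y \<le> card {j \<in> V.JL. \<exists>k\<in>Y. ?R j k})
      \<and> (\<exists>\<sigma>. bij_betw \<sigma> V.JL W.JL \<and> (\<forall>j\<in>V.JL. ?R j (\<sigma> j)))"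
    if il: "interleaved sV sW e (modL V J UV IV) (modL W K UW IW)"
  proof -
    obtain \<sigma> where \<sigma>: "bij_betw \<sigma> V.JL W.JL" and edge: "\<And>j. j \<in> V.JL \<Longrightarrow> ?R j (\<sigma> j)"
      using interleaved_summands_matching[OF il] by blast
    show ?thesis
      using card_le_neighbours_if_bij[where R = ?R, OF \<sigma> edge _ W.finite_JL]
        card_le_neighbours_if_bij_converse[where R = ?R, OF \<sigma> edge _ V.finite_JL] \<sigma> edge by blast
  qed
  ultimately show ?thesis
    by (fastforce simp: Let_def)
qed

end
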